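(* Consider the algorithm $\mathcal{S}$-DC on the half-line $[0,\infty)$ with source $0$ and speeds $(s_i)_{i\ge2}$. Let $x_1\ge x_2\ge\dots$ be the positions of its servers after serving a sequence of requests (with $x_i$ the $i$-th server from the right, servers at the source having position $0$). Then the total cost paid by $\mathcal{S}$-DC is $\sum_{i=1}^\infty z_i x_i$, where $z_1=1$ and $z_i=\frac{z_{i-1}}{s_i}+1+\frac{1}{s_i}$ for $i\ge2$.
   Context: Infinite server problem on the half-line $[0,\infty)$ with source $0$: an unbounded number of servers initially reside at $0$; requests (points of $[0,\infty)$) are revealed one by one and must be served immediately by moving a server to the request; the cost is the total distance traveled. Let $\mathcal{S}=\{s_i\ge1 : i\in\mathbb{N}, i\ge2\}$ be given by a monotonic (non-decreasing or non-increasing) sequence of speeds $s_i\ge1$. Denote by $x_i$ the $i$-th server from the right (also its position). Algorithm $\mathcal{S}$-DC: if a request lies between servers $x_{i+1}$ (to its left) and $x_i$ (to its right), move $x_{i+1}$ and $x_i$ towards it with speeds $s_{i+1}$ and $1$ respectively until one of them reaches it; if there is no server to the right of the request, move the rightmost server to the request. (With all $s_i=1$ this is the Double Coverage algorithm.) *)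

theory Defs
  imports Complex_Main
begin

text \<open>A configuration is a function x :: nat => real; x i (for i >= 1) is the position of the
 i-th server from the right. Index 0 is unused. Initially all servers are at the source 0.
 s i (i >= 2) are the speeds.\<close>

definition dc_step :: "(nat \<Rightarrow> real) \<Rightarrow> (nat \<Rightarrow> real) \<Rightarrow> real \<Rightarrow> (nat \<Rightarrow> real) \<times> real" where
  "dc_step s x r =
    (if x 1 \<le> r then (x(1 := r), r - x 1)
     else if (\<exists>i\<ge>1. x i = r) then (x, 0)
     else (let i = (THE i. 1 \<le> i \<and> x (Suc i) < r \<and> r < x i);
               t = min (x i - r) ((r - x (Suc i)) / s (Suc i))
           in (x(i := x i - t, Suc i := x (Suc i) + s (Suc i) * t), t + s (Suc i) * t)))"

definition dc_run :: "(nat \<Rightarrow> real) \<Rightarrow> real list \<Rightarrow> (nat \<Rightarrow> real) \<times> real" where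
  "dc_run s rs = foldl (\<lambda>(x, c) r. let (x', c') = dc_step s x r in (x', c + c')) ((\<lambda>_. 0), 0) rs"

fun zc :: "(nat \<Rightarrow> real) \<Rightarrow> nat \<Rightarrow> real" where
  "zc s 0 = 0"
| "zc s (Suc 0) = 1"
| "zc s (Suc (Suc i)) = zc s (Suc i) / s (Suc (Suc i)) + 1 + 1 / s (Suc (Suc i))"

end

theory Submission
  imports Defs
begin

text \<open>The weighted sum \<open>\<Sum>i. z\<^sub>i x\<^sub>i\<close> is a potential that grows by exactly the cost of every
  step. Moving the rightmost server right by \<open>d\<close> costs \<open>d\<close> and raises the potential by
  \<open>z\<^sub>1 d = d\<close>. Moving \<open>x\<^sub>i\<close> left by \<open>t\<close> and \<open>x\<^sub>i\<^sub>+\<^sub>1\<close> right by \<open>s\<^sub>i\<^sub>+\<^sub>1 t\<close> costs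
  \<open>(1 + s\<^sub>i\<^sub>+\<^sub>1) t\<close> and changes the potential by \<open>(z\<^sub>i\<^sub>+\<^sub>1 s\<^sub>i\<^sub>+\<^sub>1 - z\<^sub>i) t\<close>, which is
  the same amount by the recurrence defining \<open>z\<close>. Servers are never reordered, so the
  configuration stays sorted and the request is always bracketed by consecutive servers.\<close>

definition valid_config :: "(nat \<Rightarrow> real) \<Rightarrow> bool" where
  "valid_config x \<longleftrightarrow> x 0 = 0 \<and> (\<forall>i\<ge>1. x (Suc i) \<le> x i) \<and> finite {j. x j \<noteq> 0}"

definition potential :: "(nat \<Rightarrow> real) \<Rightarrow> (nat \<Rightarrow> real) \<Rightarrow> real" where
  "potential s x = (\<Sum>i. zc s (Suc i) * x (Suc i))"

lemma zc_mult_speed: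
  assumes "1 \<le> i" and "s (Suc i) \<noteq> 0"
  shows "zc s (Suc i) * s (Suc i) = zc s i + s (Suc i) + 1"
proof -
  obtain m where "i = Suc m" using assms(1) by (cases i) auto
  then show ?thesis using assms(2) by (simp add: field_simps)
qed

lemma potential_fun_upd:
  assumes "finite {j. x j \<noteq> 0}" and "1 \<le> k"
  shows "potential s (x(k := v)) = potential s x + zc s k * (v - x k)"
proof -
  let ?f = "\<lambda>i. zc s (Suc i) * x (Suc i)"
  let ?g = "\<lambda>i. zc s (Suc i) * (x(k := v)) (Suc i)"
  have "finite {i. x (Suc i) \<noteq> 0}"
    using finite_vimageI[OF assms(1), of Suc] by (simp add: vimage_def)
  then have "summable ?g" "summable ?f"
    using assms(2) by (auto intro!: summable_finite[of "insert (k - 1) {i. x (Suc i) \<noteq> 0}"] split: if_splits)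
  then have "potential s (x(k := v)) - potential s x = (\<Sum>i. ?g i - ?f i)"
    unfolding potential_def by (rule suminf_diff)
  also have "\<dots> = (\<Sum>i\<in>{k - 1}. ?g i - ?f i)"
    by (rule suminf_finite) auto
  also have "\<dots> = zc s k * (v - x k)"
    using assms(2) by (simp add: algebra_simps)
  finally show ?thesis by simp
qed

lemma valid_config_antimono:
  assumes "valid_config x" and "1 \<le> i" and "i \<le> j"
  shows "x j \<le> x i"
  using assms(3)
proof (induction j rule: dec_induct)
  case (step m)
  then have "x (Suc m) \<le> x m" using assms(1,2) unfolding valid_config_def by simp
  with step.IH show ?case by simp
qed simp

lemma valid_config_fun_upd_first:
  assumes "valid_config x" and "x 1 \<le> r"
  shows "valid_config (x(1 := r))"
proof -
  have "{j. (x(1 := r)) j \<noteq> 0} \<subseteq> insert 1 {j. x j \<noteq> 0}" by auto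
  moreover have "finite {j. x j \<noteq> 0}" using assms(1) unfolding valid_config_def by simp
  ultimately have "finite {j. (x(1 := r)) j \<noteq> 0}" by (rule finite_subset[OF _ finite_insert[THEN iffD2]])
  with assms show ?thesis
    unfolding valid_config_def by auto
qed

lemma valid_config_move_pair:
  assumes "valid_config x" and "1 \<le> i" and "0 \<le> t" and "0 \<le> d"
    and "x (Suc i) + d \<le> x i - t"
  shows "valid_config (x(i := x i - t, Suc i := x (Suc i) + d))"
    (is "valid_config ?y")
proof -
  have sorted: "x (Suc k) \<le> x k" if "1 \<le> k" for k
    using assms(1) that unfolding valid_config_def by simp
  have "?y (Suc k) \<le> ?y k" if "1 \<le> k" for k
  proof -
    consider "Suc k = i" | "k = i" | "k = Suc i" | "k \<noteq> i" "Suc k \<noteq> i" "k \<noteq> Suc i" by blast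
    then show ?thesis
    proof cases
      case 1
      then show ?thesis using sorted[OF that] assms(3) by auto
    next
      case 3
      then show ?thesis using sorted[of "Suc i"] assms(4) by simp
    qed (use assms(5) sorted[OF that] in auto)
  qed
  moreover have "finite {j. ?y j \<noteq> 0}"
  proof (rule finite_subset)
    show "{j. ?y j \<noteq> 0} \<subseteq> insert i (insert (Suc i) {j. x j \<noteq> 0})" by auto
    show "finite (insert i (insert (Suc i) {j. x j \<noteq> 0}))"
      using assms(1) unfolding valid_config_def by simp
  qed
  ultimately show ?thesis
    using assms(1,2) unfolding valid_config_def by auto
qed

text \<open>A request left of \<open>x\<^sub>1\<close> and on no server lies strictly between two consecutive
  servers; here \<open>r \<ge> 0\<close> matters, since servers at the source sit at \<open>0\<close>.\<close>

lemma bracketing_index_exists: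
  assumes "valid_config x" and "0 \<le> r" and "r < x 1" and "\<forall>i\<ge>1. x i \<noteq> r"
  obtains i where "1 \<le> i" and "x (Suc i) < r" and "r < x i"
proof -
  obtain m where "\<forall>j\<in>{j. x j \<noteq> 0}. j \<le> m"
    using assms(1) unfolding valid_config_def finite_nat_set_iff_bounded_le by blast
  then have "x (Suc m) = 0" by fastforce
  with assms(2,4) have ex: "\<exists>j. 1 \<le> j \<and> x j < r"
    by (metis le_add1 less_eq_real_def plus_1_eq_Suc)
  define j where "j = (LEAST j. 1 \<le> j \<and> x j < r)"
  have j: "1 \<le> j" "x j < r" using LeastI_ex[OF ex] unfolding j_def by auto
  moreover have "j \<noteq> 1" using j assms(3) by auto
  ultimately obtain i where i: "j = Suc i" "1 \<le> i" by (cases j) auto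
  have "\<not> x i < r" using Least_le[of "\<lambda>j. 1 \<le> j \<and> x j < r" i] i unfolding j_def by auto
  with assms(4) i(2) have "r < x i" by force
  with i j show thesis using that by simp
qed

lemma the_bracketing_index:
  assumes "valid_config x" and "1 \<le> i" and "x (Suc i) < r" and "r < x i"
  shows "(THE i. 1 \<le> i \<and> x (Suc i) < r \<and> r < x i) = i"
proof (rule the_equality)
  fix k assume k: "1 \<le> k \<and> x (Suc k) < r \<and> r < x k"
  show "k = i"
  proof (rule ccontr)
    assume "k \<noteq> i"
    then consider "Suc i \<le> k" | "Suc k \<le> i" by linarith
    then show False
    proof cases
      case 1
      then show False using valid_config_antimono[OF assms(1), of "Suc i" k] assms(3) k by simp
    next
      case 2
      then show False using valid_config_antimono[OF assms(1), of "Suc k" i] assms(4) k by simp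
    qed
  qed
qed (use assms in simp)

lemma dc_step_move_pair:
  assumes speed: "0 < s (Suc i)" and x: "valid_config x"
    and i: "1 \<le> i" "x (Suc i) < r" "r < x i"
  shows "valid_config (fst (dc_step s x r))
    \<and> potential s (fst (dc_step s x r)) = potential s x + snd (dc_step s x r)"
proof -
  define t where "t = min (x i - r) ((r - x (Suc i)) / s (Suc i))"
  let ?y = "x(i := x i - t)"
  have t: "0 \<le> t" "t \<le> x i - r" "s (Suc i) * t \<le> r - x (Suc i)"
    using i speed unfolding t_def by (auto simp: min_def field_simps)
  have no_server: "x k \<noteq> r" if "1 \<le> k" for k
  proof (cases "k \<le> i")
    case True
    then show ?thesis using valid_config_antimono[OF x that] i(3) by fastforce
  next
    case False
    then show ?thesis using valid_config_antimono[OF x, of "Suc i" k] i by fastforce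
  qed
  have step: "dc_step s x r = (?y(Suc i := x (Suc i) + s (Suc i) * t), t + s (Suc i) * t)"
    using i no_server the_bracketing_index[OF x i] valid_config_antimono[OF x order.refl i(1)]
    by (auto simp: dc_step_def Let_def t_def)
  have fin: "finite {j. x j \<noteq> 0}" "finite {j. ?y j \<noteq> 0}"
    using x unfolding valid_config_def by (auto intro: finite_subset[of _ "insert i {j. x j \<noteq> 0}"])
  have "potential s (?y(Suc i := x (Suc i) + s (Suc i) * t))
      = potential s ?y + zc s (Suc i) * (x (Suc i) + s (Suc i) * t - ?y (Suc i))"
    by (rule potential_fun_upd[OF fin(2)]) simp
  also have "x (Suc i) + s (Suc i) * t - ?y (Suc i) = s (Suc i) * t"
    by simp
  also have "potential s ?y = potential s x + zc s i * (x i - t - x i)"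
    by (rule potential_fun_upd[OF fin(1) i(1)])
  also have "potential s x + zc s i * (x i - t - x i) + zc s (Suc i) * (s (Suc i) * t)
      = potential s x + (zc s (Suc i) * s (Suc i) - zc s i) * t"
    by (simp add: algebra_simps)
  also have "\<dots> = potential s x + (t + s (Suc i) * t)"
    using zc_mult_speed[OF i(1), of s] speed by (simp add: algebra_simps)
  finally have "potential s (?y(Suc i := x (Suc i) + s (Suc i) * t))
      = potential s x + (t + s (Suc i) * t)" .
  moreover have "valid_config (?y(Suc i := x (Suc i) + s (Suc i) * t))"
    using valid_config_move_pair[OF x i(1) t(1)] t speed by simp
  ultimately show ?thesis unfolding step by simp
qed

lemma dc_step_potential:
  assumes speeds: "\<forall>i\<ge>2. 0 < s i" and x: "valid_config x" and r: "0 \<le> r"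
  shows "valid_config (fst (dc_step s x r))
    \<and> potential s (fst (dc_step s x r)) = potential s x + snd (dc_step s x r)"
proof (cases "x 1 \<le> r")
  case True
  have fin: "finite {j. x j \<noteq> 0}" using x unfolding valid_config_def by simp
  have step: "dc_step s x r = (x(1 := r), r - x 1)" using True by (simp add: dc_step_def)
  have "potential s (x(1 := r)) = potential s x + (r - x 1)"
    using potential_fun_upd[OF fin, of 1 s r] by simp
  with valid_config_fun_upd_first[OF x True] show ?thesis unfolding step by simp
next
  case False
  then have first: "r < x 1" by simp
  show ?thesis
  proof (cases "\<exists>i\<ge>1. x i = r")
    case True
    then have "dc_step s x r = (x, 0)" using False by (simp add: dc_step_def)
    with x show ?thesis by simp
  next
    case False
    obtain i where "1 \<le> i" "x (Suc i) < r" "r < x i"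
      by (rule bracketing_index_exists[OF x r first]) (use False in blast)
    moreover have "0 < s (Suc i)" using speeds \<open>1 \<le> i\<close> by simp
    ultimately show ?thesis using dc_step_move_pair[OF _ x] by blast
  qed
qed

lemma dc_run_potential:
  assumes speeds: "\<forall>i\<ge>2. 0 < s i" and reqs: "\<forall>r\<in>set rs. r \<ge> 0"
  shows "valid_config (fst (dc_run s rs)) \<and> snd (dc_run s rs) = potential s (fst (dc_run s rs))"
  using reqs
proof (induction rs rule: rev_induct)
  case Nil
  then show ?case by (simp add: dc_run_def valid_config_def potential_def)
next
  case (snoc r rs)
  obtain x c where run: "dc_run s rs = (x, c)" by fastforce
  obtain y d where step: "dc_step s x r = (y, d)" by fastforce
  have "dc_run s (rs @ [r]) = (y, c + d)"
    using run step unfolding dc_run_def by simp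
  moreover have "valid_config x" "c = potential s x"
    using snoc run by simp_all
  ultimately show ?case
    using dc_step_potential[OF speeds, of x r] step snoc.prems by simp
qed

theorem lemma1:
  fixes s :: "nat \<Rightarrow> real" and rs :: "real list"
  assumes speeds: "\<forall>i\<ge>2. s i \<ge> 1"
    and mono: "monotone_on {2..} (\<le>) (\<le>) s \<or> monotone_on {2..} (\<le>) (\<ge>) s"
    and reqs: "\<forall>r\<in>set rs. r \<ge> 0"
  shows "snd (dc_run s rs) = (\<Sum>i. zc s (Suc i) * fst (dc_run s rs) (Suc i))"
proof -
  have "\<forall>i\<ge>2. 0 < s i" using speeds by (simp add: less_le_trans[OF zero_less_one])
  from dc_run_potential[OF this reqs] show ?thesis unfolding potential_def by simp
qed

end
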